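(* Let $X,Y$ be finite sets with $\max\{|X|,|Y|\}\le N$, $c\in\mathbb R_+^{X\times Y}$, and $\mu=r/M\in\mathcal P(X)$, $\nu=s/M\in\mathcal P(Y)$ for a positive integer $M$ and $r\in\mathbb Z_{++}^X$, $s\in\mathbb Z_{++}^Y$. Let $\varepsilon_1>\varepsilon_2>0$ and let $(\alpha_a,\beta_a)$ be maximizers of $J_{\varepsilon_a}$, $a=1,2$. Run the asynchronous Sinkhorn iteration with parameter $\varepsilon=\varepsilon_2$ initialized with $v^{(0)}=\exp(\beta_1/\varepsilon_2)$. Then for every $q_{\mathrm{target}}\in(0,1)$ there exists $$n\le2+\frac{\varepsilon_1}{\varepsilon_2}\cdot\frac{N(4\log N+24\log M)+\log M}{1-q_{\mathrm{target}}}$$ with $q^{(n)}\ge q_{\mathrm{target}}$.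
   Context: For $\varepsilon>0$, $K_\varepsilon(x,y)=\exp(-c(x,y)/\varepsilon)\mu(x)\nu(y)$ and $J_\varepsilon(\alpha,\beta)=\langle\alpha,\mu\rangle+\langle\beta,\nu\rangle-\varepsilon\sum_{x,y}K_\varepsilon(x,y)(\exp((\alpha(x)+\beta(y))/\varepsilon)-1)$. Asynchronous Sinkhorn iteration with parameter $\varepsilon$ and kernel $K=K_\varepsilon$: given $v^{(0)}\in\mathbb R_{++}^Y$, for $\ell\ge0$: $u^{(\ell+1)}=\mu\oslash(Kv^{(\ell)})$, $\hat v^{(\ell+1)}=\nu\oslash(K^\top u^{(\ell+1)})$, $v^{(\ell+1)}=\min\{v^{(\ell)},\hat v^{(\ell+1)}\}$ componentwise, $\pi^{(\ell+1)}=\mathrm{diag}(u^{(\ell+1)})K\mathrm{diag}(v^{(\ell+1)})$, $q^{(\ell+1)}=\sum_{x,y}\pi^{(\ell+1)}(x,y)$; $\oslash$ is componentwise division. *)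

theory Defs
  imports Complex_Main
begin

definition Kern :: "real \<Rightarrow> ('x \<Rightarrow> 'y \<Rightarrow> real) \<Rightarrow> ('x \<Rightarrow> real) \<Rightarrow> ('y \<Rightarrow> real) \<Rightarrow> 'x \<Rightarrow> 'y \<Rightarrow> real" where
  "Kern eps c \<mu> \<nu> x y = exp (- c x y / eps) * \<mu> x * \<nu> y"

definition Jfun :: "real \<Rightarrow> ('x::finite \<Rightarrow> 'y::finite \<Rightarrow> real) \<Rightarrow> ('x \<Rightarrow> real) \<Rightarrow> ('y \<Rightarrow> real)
    \<Rightarrow> ('x \<Rightarrow> real) \<Rightarrow> ('y \<Rightarrow> real) \<Rightarrow> real" where
  "Jfun eps c \<mu> \<nu> \<alpha> \<beta> =
     (\<Sum>x\<in>UNIV. \<alpha> x * \<mu> x) + (\<Sum>y\<in>UNIV. \<beta> y * \<nu> y)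
     - eps * (\<Sum>x\<in>UNIV. \<Sum>y\<in>UNIV. Kern eps c \<mu> \<nu> x y * (exp ((\<alpha> x + \<beta> y) / eps) - 1))"

definition sk_u :: "('x::finite \<Rightarrow> 'y::finite \<Rightarrow> real) \<Rightarrow> ('x \<Rightarrow> real) \<Rightarrow> ('y \<Rightarrow> real) \<Rightarrow> 'x \<Rightarrow> real" where
  "sk_u K \<mu> v = (\<lambda>x. \<mu> x / (\<Sum>y\<in>UNIV. K x y * v y))"

definition sk_step :: "('x::finite \<Rightarrow> 'y::finite \<Rightarrow> real) \<Rightarrow> ('x \<Rightarrow> real) \<Rightarrow> ('y \<Rightarrow> real) \<Rightarrow> ('y \<Rightarrow> real) \<Rightarrow> 'y \<Rightarrow> real" where
  "sk_step K \<mu> \<nu> v = (\<lambda>y. min (v y) (\<nu> y / (\<Sum>x\<in>UNIV. K x y * sk_u K \<mu> v x)))"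

primrec sk_v :: "('x::finite \<Rightarrow> 'y::finite \<Rightarrow> real) \<Rightarrow> ('x \<Rightarrow> real) \<Rightarrow> ('y \<Rightarrow> real) \<Rightarrow> ('y \<Rightarrow> real) \<Rightarrow> nat \<Rightarrow> 'y \<Rightarrow> real" where
  "sk_v K \<mu> \<nu> v0 0 = v0"
| "sk_v K \<mu> \<nu> v0 (Suc l) = sk_step K \<mu> \<nu> (sk_v K \<mu> \<nu> v0 l)"

text \<open>u^(l+1) = mu / (K v^(l)).\<close>
definition sk_uu :: "('x::finite \<Rightarrow> 'y::finite \<Rightarrow> real) \<Rightarrow> ('x \<Rightarrow> real) \<Rightarrow> ('y \<Rightarrow> real) \<Rightarrow> ('y \<Rightarrow> real) \<Rightarrow> nat \<Rightarrow> 'x \<Rightarrow> real" where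
  "sk_uu K \<mu> \<nu> v0 l = sk_u K \<mu> (sk_v K \<mu> \<nu> v0 l)"

text \<open>q^(l+1) = total mass of diag(u^(l+1)) K diag(v^(l+1)) (meaningful for index n = l+1 >= 1).\<close>
definition sk_q :: "('x::finite \<Rightarrow> 'y::finite \<Rightarrow> real) \<Rightarrow> ('x \<Rightarrow> real) \<Rightarrow> ('y \<Rightarrow> real) \<Rightarrow> ('y \<Rightarrow> real) \<Rightarrow> nat \<Rightarrow> real" where
  "sk_q K \<mu> \<nu> v0 n =
     (\<Sum>x\<in>UNIV. \<Sum>y\<in>UNIV. sk_uu K \<mu> \<nu> v0 (n - 1) x * K x y * sk_v K \<mu> \<nu> v0 n y)"

end

(* A maximiser (alpha, beta) of J at temperature eps is characterised by its Gibbs plan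
   mu x nu y exp (-(c x y - alpha x - beta y) / eps) being a coupling of mu and nu.  Since mu and
   nu have denominator M, the flow of such a plan across a cut Q x R is a multiple of 1/M; comparing
   the plans of the two temperatures across every cut, a gap of length g among the values of
   beta1 - beta2 and alpha2 - alpha1 forces g <= eps1 (2 log M + log N), so beta1 - beta2 oscillates
   by at most (2N + 1) times that amount.  Hence the warm start exp (beta1 / eps2) lies above a
   fixed point v* of the eps2-scaling.  Above v* the asynchronous iteration is monotone and the
   potential sum_x mu x log (K v) x decreases by at least 1 - q in every step, while its initial
   excess over the value at v* is bounded through the oscillation estimate and the comparison of
   the two dual values. *)

theory Submission
  imports Defs "HOL-Analysis.Convex"
begin

section \<open>Maximisers of the dual objective\<close>

lemma exp_scaled_le_convex_comb:
  fixes t u :: real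
  assumes "0 \<le> t" "t \<le> 1"
  shows "exp (t * u) \<le> t * exp u + (1 - t)"
  using convex_onD[OF exp_convex, of t 0 u] assms by (simp add: algebra_simps)

lemma Kern_mult_exp:
  "Kern eps c \<mu> \<nu> x y * exp ((a + b) / eps) = \<mu> x * (\<nu> y * exp ((a + b - c x y) / eps))"
proof -
  have "exp ((a + b - c x y) / eps) = exp (- c x y / eps) * exp ((a + b) / eps)"
    by (simp add: exp_add[symmetric] diff_divide_distrib)
  thus ?thesis unfolding Kern_def by simp
qed

lemma Jfun_row_form:
  fixes c :: "'x::finite \<Rightarrow> 'y::finite \<Rightarrow> real"
  shows "Jfun eps c \<mu> \<nu> \<alpha> \<beta> =
    (\<Sum>x\<in>UNIV. \<mu> x * (\<alpha> x - eps * (\<Sum>y\<in>UNIV. \<nu> y * exp ((\<alpha> x + \<beta> y - c x y) / eps))))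
    + (\<Sum>y\<in>UNIV. \<beta> y * \<nu> y) + eps * (\<Sum>x\<in>UNIV. \<Sum>y\<in>UNIV. Kern eps c \<mu> \<nu> x y)"
  unfolding Jfun_def
  by (simp add: sum_subtractf Kern_mult_exp sum_distrib_left sum.distrib algebra_simps)

lemma Jfun_swap:
  "Jfun eps c \<mu> \<nu> \<alpha> \<beta> = Jfun eps (\<lambda>y x. c x y) \<nu> \<mu> \<beta> \<alpha>"
  unfolding Jfun_def Kern_def
  by (subst sum.swap[of _ "UNIV::'b set"]) (simp add: algebra_simps)

lemma Jfun_shift_row:
  fixes c :: "'x::finite \<Rightarrow> 'y::finite \<Rightarrow> real" and \<alpha> :: "'x \<Rightarrow> real" and \<beta> :: "'y \<Rightarrow> real"
    and \<nu> :: "'y \<Rightarrow> real" and x :: 'x and eps :: real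
  defines "T \<equiv> (\<Sum>y\<in>UNIV. \<nu> y * exp ((\<alpha> x + \<beta> y - c x y) / eps))"
  shows "Jfun eps c \<mu> \<nu> (\<alpha>(x := \<alpha> x + t)) \<beta>
           = Jfun eps c \<mu> \<nu> \<alpha> \<beta> + \<mu> x * (t - eps * T * (exp (t / eps) - 1))"
proof -
  define row where "row \<alpha>' x' = \<mu> x' * (\<alpha>' x' - eps * (\<Sum>y\<in>UNIV. \<nu> y * exp ((\<alpha>' x' + \<beta> y - c x' y) / eps)))"
    for \<alpha>' x'
  have "row (\<alpha>(x := \<alpha> x + t)) x' = row \<alpha> x' + (if x' = x then \<mu> x * (t - eps * T * (exp (t / eps) - 1)) else 0)"
    for x'
  proof (cases "x' = x")
    case True
    have "exp ((\<alpha> x + t + \<beta> y - c x y) / eps) = exp (t / eps) * exp ((\<alpha> x + \<beta> y - c x y) / eps)" for y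
      by (simp add: exp_add[symmetric] add_divide_distrib[symmetric] algebra_simps)
    hence "(\<Sum>y\<in>UNIV. \<nu> y * exp ((\<alpha> x + t + \<beta> y - c x y) / eps)) = exp (t / eps) * T"
      unfolding T_def by (simp add: sum_distrib_left algebra_simps)
    with True show ?thesis unfolding row_def T_def by (simp add: algebra_simps)
  qed (simp add: row_def)
  hence "(\<Sum>x'\<in>UNIV. row (\<alpha>(x := \<alpha> x + t)) x') = (\<Sum>x'\<in>UNIV. row \<alpha> x') + \<mu> x * (t - eps * T * (exp (t / eps) - 1))"
    by (simp add: sum.distrib)
  thus ?thesis unfolding Jfun_row_form row_def by simp
qed

lemma Jfun_maximizer_row_marginal:
  fixes c :: "'x::finite \<Rightarrow> 'y::finite \<Rightarrow> real"
  assumes eps: "eps > 0" and \<mu>: "\<And>x. \<mu> x > 0" and \<nu>: "\<And>y. \<nu> y > 0"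
    and max: "\<And>\<alpha>' \<beta>'. Jfun eps c \<mu> \<nu> \<alpha>' \<beta>' \<le> Jfun eps c \<mu> \<nu> \<alpha> \<beta>"
  shows "(\<Sum>y\<in>UNIV. \<nu> y * exp ((\<alpha> x + \<beta> y - c x y) / eps)) = 1"
proof -
  define T where "T = (\<Sum>y\<in>UNIV. \<nu> y * exp ((\<alpha> x + \<beta> y - c x y) / eps))"
  have T: "T > 0" unfolding T_def by (intro sum_pos) (auto intro: mult_pos_pos \<nu>)
  \<comment> \<open>shifting row x by the optimal amount -eps ln T cannot increase J\<close>
  have "\<mu> x * (- eps * ln T - eps * T * (exp (- eps * ln T / eps) - 1)) \<le> 0"
    using max[of "\<alpha>(x := \<alpha> x + - eps * ln T)" \<beta>]
      Jfun_shift_row[of eps c \<mu> \<nu> \<alpha> x "- eps * ln T" \<beta>]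
    unfolding T_def by linarith
  moreover have "exp (- eps * ln T / eps) = 1 / T" using eps T by (simp add: exp_minus inverse_eq_divide)
  ultimately have "\<mu> x * eps * (T - 1 - ln T) \<le> 0" using T by (simp add: algebra_simps)
  hence "T - 1 \<le> ln T" using \<mu>[of x] eps by (simp add: mult_le_0_iff)
  with T have "ln T = T - 1" using ln_le_minus_one[of T] by linarith
  thus ?thesis using ln_eq_minus_one T unfolding T_def by blast
qed

lemma Jfun_maximizer_col_marginal:
  fixes c :: "'x::finite \<Rightarrow> 'y::finite \<Rightarrow> real"
  assumes eps: "eps > 0" and \<mu>: "\<And>x. \<mu> x > 0" and \<nu>: "\<And>y. \<nu> y > 0"
    and max: "\<And>\<alpha>' \<beta>'. Jfun eps c \<mu> \<nu> \<alpha>' \<beta>' \<le> Jfun eps c \<mu> \<nu> \<alpha> \<beta>"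
  shows "(\<Sum>x\<in>UNIV. \<mu> x * exp ((\<alpha> x + \<beta> y - c x y) / eps)) = 1"
  using Jfun_maximizer_row_marginal[of eps \<nu> \<mu> "\<lambda>y x. c x y" \<beta> \<alpha> y] max eps \<mu> \<nu>
  by (simp add: Jfun_swap[of eps c] add.commute)

section \<open>Gibbs plans and cuts\<close>

abbreviation block_sum :: "('x \<Rightarrow> 'y \<Rightarrow> real) \<Rightarrow> 'x set \<Rightarrow> 'y set \<Rightarrow> real" where
  "block_sum P A B \<equiv> \<Sum>x\<in>A. \<Sum>y\<in>B. P x y"

definition coupling :: "('x::finite \<Rightarrow> real) \<Rightarrow> ('y::finite \<Rightarrow> real) \<Rightarrow> ('x \<Rightarrow> 'y \<Rightarrow> real) \<Rightarrow> bool" where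
  "coupling \<mu> \<nu> P \<longleftrightarrow> (\<forall>x. (\<Sum>y\<in>UNIV. P x y) = \<mu> x) \<and> (\<forall>y. (\<Sum>x\<in>UNIV. P x y) = \<nu> y)"

definition gibbs :: "('x \<Rightarrow> real) \<Rightarrow> ('y \<Rightarrow> real) \<Rightarrow> real \<Rightarrow> ('x \<Rightarrow> 'y \<Rightarrow> real) \<Rightarrow> 'x \<Rightarrow> 'y \<Rightarrow> real" where
  "gibbs \<mu> \<nu> e \<sigma> x y = \<mu> x * \<nu> y * exp (- \<sigma> x y / e)"

definition dual_slack :: "('x \<Rightarrow> 'y \<Rightarrow> real) \<Rightarrow> ('x \<Rightarrow> real) \<Rightarrow> ('y \<Rightarrow> real) \<Rightarrow> 'x \<Rightarrow> 'y \<Rightarrow> real" where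
  "dual_slack c \<alpha> \<beta> x y = c x y - \<alpha> x - \<beta> y"

lemma gibbs_dual_slack:
  "gibbs \<mu> \<nu> eps (dual_slack c \<alpha> \<beta>) x y = \<mu> x * (\<nu> y * exp ((\<alpha> x + \<beta> y - c x y) / eps))"
  unfolding gibbs_def dual_slack_def by (simp add: algebra_simps)

lemma Jfun_gibbs_form:
  fixes c :: "'x::finite \<Rightarrow> 'y::finite \<Rightarrow> real"
  shows "Jfun eps c \<mu> \<nu> \<alpha> \<beta> = (\<Sum>x\<in>UNIV. \<alpha> x * \<mu> x) + (\<Sum>y\<in>UNIV. \<beta> y * \<nu> y)
     - eps * (block_sum (gibbs \<mu> \<nu> eps (dual_slack c \<alpha> \<beta>)) UNIV UNIV
              - block_sum (Kern eps c \<mu> \<nu>) UNIV UNIV)"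
  unfolding Jfun_def by (simp add: right_diff_distrib sum_subtractf Kern_mult_exp gibbs_dual_slack)

lemma Jfun_maximizer_coupling:
  fixes c :: "'x::finite \<Rightarrow> 'y::finite \<Rightarrow> real"
  assumes "eps > 0" "\<And>x. \<mu> x > 0" "\<And>y. \<nu> y > 0"
    and "\<And>\<alpha>' \<beta>'. Jfun eps c \<mu> \<nu> \<alpha>' \<beta>' \<le> Jfun eps c \<mu> \<nu> \<alpha> \<beta>"
  shows "coupling \<mu> \<nu> (gibbs \<mu> \<nu> eps (dual_slack c \<alpha> \<beta>))"
  unfolding coupling_def gibbs_dual_slack
proof (intro conjI allI)
  fix x
  show "(\<Sum>y\<in>UNIV. \<mu> x * (\<nu> y * exp ((\<alpha> x + \<beta> y - c x y) / eps))) = \<mu> x"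
    using Jfun_maximizer_row_marginal[OF assms, of x] by (simp add: sum_distrib_left[symmetric])
next
  fix y
  have "(\<Sum>x\<in>UNIV. \<mu> x * (\<nu> y * exp ((\<alpha> x + \<beta> y - c x y) / eps)))
      = \<nu> y * (\<Sum>x\<in>UNIV. \<mu> x * exp ((\<alpha> x + \<beta> y - c x y) / eps))"
    by (simp add: sum_distrib_left algebra_simps)
  thus "(\<Sum>x\<in>UNIV. \<mu> x * (\<nu> y * exp ((\<alpha> x + \<beta> y - c x y) / eps))) = \<nu> y"
    using Jfun_maximizer_col_marginal[OF assms, of y] by simp
qed

lemma sum_UNIV_split: "sum f (UNIV::'a::finite set) = sum f A + sum f (- A)"
proof -
  have "UNIV = A \<union> - A" by auto
  thus ?thesis by (metis finite sum.union_disjoint Compl_disjoint)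
qed

lemma coupling_cut_balance:
  assumes "coupling \<mu> \<nu> P"
  shows "block_sum P (- Q) R - block_sum P Q (- R) = (\<Sum>y\<in>R. \<nu> y) - (\<Sum>x\<in>Q. \<mu> x)"
proof -
  have "(\<Sum>y\<in>R. \<nu> y) = (\<Sum>y\<in>R. (\<Sum>x\<in>Q. P x y) + (\<Sum>x\<in>- Q. P x y))"
    using assms unfolding coupling_def by (simp add: sum_UNIV_split[of _ Q])
  also have "\<dots> = block_sum P Q R + block_sum P (- Q) R"
    by (simp add: sum.distrib sum.swap[of _ R])
  finally have "(\<Sum>y\<in>R. \<nu> y) = block_sum P Q R + block_sum P (- Q) R" .
  moreover have "\<mu> x = (\<Sum>y\<in>R. P x y) + (\<Sum>y\<in>- R. P x y)" for x
    using assms sum_UNIV_split[of "P x" R] unfolding coupling_def by simp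
  hence "(\<Sum>x\<in>Q. \<mu> x) = block_sum P Q R + block_sum P Q (- R)"
    by (simp add: sum.distrib)
  ultimately show ?thesis by simp
qed

lemma sum2_exists_ge_average:
  fixes f :: "'x \<Rightarrow> 'y \<Rightarrow> real"
  assumes "finite A" "finite B" "a \<in> A" "b \<in> B" "card A \<le> n" "card B \<le> n"
    and "\<And>x y. f x y \<ge> 0"
  shows "\<exists>x\<in>A. \<exists>y\<in>B. block_sum f A B / (real n)\<^sup>2 \<le> f x y"
proof (rule ccontr)
  assume "\<not> ?thesis"
  hence lt: "f x y < block_sum f A B / (real n)\<^sup>2" if "x \<in> A" "y \<in> B" for x y
    using that by (auto simp: not_le)
  have A: "card A > 0" and B: "card B > 0" using assms by (auto simp: card_gt_0_iff)
  have "block_sum f A B < real (card A) * (real (card B) * (block_sum f A B / (real n)\<^sup>2))"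
    using lt by (intro sum_bounded_above_strict[OF _ A] sum_bounded_above_strict[OF _ B]) auto
  also have "\<dots> \<le> real n * (real n * (block_sum f A B / (real n)\<^sup>2))"
    using assms by (intro mult_mono) (auto intro!: mult_nonneg_nonneg divide_nonneg_nonneg sum_nonneg)
  also have "\<dots> = block_sum f A B" using A assms(5) by (simp add: power2_eq_square)
  finally show False by simp
qed

lemma block_sum_ge_member:
  assumes "x \<in> A" "y \<in> B" "finite A" "finite B" "\<And>x y. P x y \<ge> 0"
  shows "P x y \<le> block_sum P A B"
proof -
  have "P x y \<le> (\<Sum>y'\<in>B. P x y')" using assms by (intro member_le_sum) auto
  also have "\<dots> \<le> block_sum P A B"
    using assms by (intro member_le_sum[of x A "\<lambda>x. \<Sum>y\<in>B. P x y"]) (auto intro: sum_nonneg)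
  finally show ?thesis .
qed

lemma gibbs_block_shift:
  assumes "\<And>x y. x \<in> A \<Longrightarrow> y \<in> B \<Longrightarrow> \<sigma>' x y \<ge> \<sigma> x y + g" and "e > 0"
    and "\<And>x. \<mu> x \<ge> 0" "\<And>y. \<nu> y \<ge> 0"
  shows "block_sum (gibbs \<mu> \<nu> e \<sigma>') A B \<le> exp (- g / e) * block_sum (gibbs \<mu> \<nu> e \<sigma>) A B"
  unfolding sum_distrib_left gibbs_def
proof (intro sum_mono)
  fix x y assume "x \<in> A" "y \<in> B"
  hence "- \<sigma>' x y / e \<le> (- g - \<sigma> x y) / e"
    using assms(1)[of x y] \<open>e > 0\<close> by (intro divide_right_mono) auto
  hence "- \<sigma>' x y / e \<le> - g / e + - \<sigma> x y / e" by (simp add: diff_divide_distrib)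
  hence "exp (- \<sigma>' x y / e) \<le> exp (- g / e) * exp (- \<sigma> x y / e)" by (simp add: exp_add[symmetric])
  hence "\<mu> x * \<nu> y * exp (- \<sigma>' x y / e) \<le> \<mu> x * \<nu> y * (exp (- g / e) * exp (- \<sigma> x y / e))"
    using assms(3,4) by (intro mult_left_mono) auto
  thus "\<mu> x * \<nu> y * exp (- \<sigma>' x y / e) \<le> exp (- g / e) * (\<mu> x * \<nu> y * exp (- \<sigma> x y / e))"
    by (simp add: mult_ac)
qed

lemma one_le_bound_of_card_UNIV:
  assumes "card (UNIV :: 'a::finite set) \<le> N"
  shows "1 \<le> real N"
  using assms finite_UNIV_card_ge_0[where 'a = 'a] by simp

lemma gap_free_interval_le:
  fixes S :: "real set"
  assumes fin: "finite S" and h: "h \<ge> 0"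
    and gap: "\<And>t g. a \<le> t \<Longrightarrow> t + g \<le> b \<Longrightarrow> h < g \<Longrightarrow> \<exists>s\<in>S. t < s \<and> s < t + g"
  shows "b - a \<le> (real (card S) + 1) * h"
proof (rule ccontr)
  assume long: "\<not> ?thesis"
  define n where "n = card S"
  define w where "w = (b - a) / (real n + 1)"
  have w: "h < w" unfolding w_def n_def using long by (simp add: pos_less_divide_eq mult.commute)
  \<comment> \<open>n + 1 disjoint windows of width w each contain a point of S\<close>
  have "\<exists>s\<in>S. a + real k * w < s \<and> s < a + real k * w + w" if "k \<le> n" for k
  proof -
    have "real k * w \<le> real n * w" using that w h by (intro mult_right_mono) auto
    moreover have "(real n + 1) * w = b - a" unfolding w_def by simp
    moreover have "real n * w + w = (real n + 1) * w" by (simp add: distrib_right)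
    ultimately have "a + real k * w + w \<le> b" by linarith
    moreover have "a \<le> a + real k * w" using w h by simp
    ultimately show ?thesis using gap w by blast
  qed
  then obtain f where f: "\<And>k. k \<le> n \<Longrightarrow> f k \<in> S \<and> a + real k * w < f k \<and> f k < a + real k * w + w"
    by metis
  have "f k < f k'" if "k < k'" "k' \<le> n" for k k'
  proof -
    have "(real k + 1) * w \<le> real k' * w" using that w h by (intro mult_right_mono) auto
    hence "real k * w + w \<le> real k' * w" by (simp add: distrib_right)
    thus ?thesis using f[of k] f[of k'] that by force
  qed
  hence "inj_on f {..n}" by (metis atMost_iff inj_onI less_irrefl linorder_neqE_nat)
  moreover have "f ` {..n} \<subseteq> S" using f by auto
  ultimately have "card {..n} \<le> card S" using fin by (rule card_inj_on_le)
  thus False unfolding n_def by simp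
qed

section \<open>The asynchronous iteration above a fixed point\<close>

definition sk_potential :: "('x::finite \<Rightarrow> 'y::finite \<Rightarrow> real) \<Rightarrow> ('x \<Rightarrow> real) \<Rightarrow> ('y \<Rightarrow> real) \<Rightarrow> real" where
  "sk_potential K \<mu> v = (\<Sum>x\<in>UNIV. \<mu> x * ln (\<Sum>y\<in>UNIV. K x y * v y))"

locale sinkhorn_fixed_point =
  fixes K :: "'x::finite \<Rightarrow> 'y::finite \<Rightarrow> real" and \<mu> :: "'x \<Rightarrow> real" and \<nu> :: "'y \<Rightarrow> real"
    and w :: "'y \<Rightarrow> real" and u :: "'x \<Rightarrow> real"
  assumes K_pos: "\<And>x y. K x y > 0" and \<mu>_pos: "\<And>x. \<mu> x > 0" and \<nu>_pos: "\<And>y. \<nu> y > 0"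
    and \<mu>_sum: "(\<Sum>x\<in>UNIV. \<mu> x) = 1"
    and w_pos: "\<And>y. w y > 0"
    and row_marginal: "\<And>x. u x * (\<Sum>y\<in>UNIV. K x y * w y) = \<mu> x"
    and col_marginal: "\<And>y. w y * (\<Sum>x\<in>UNIV. K x y * u x) = \<nu> y"
begin

lemma K_mult_mono:
  assumes "\<And>y. w y \<le> v y"
  shows "(\<Sum>y\<in>UNIV. K x y * w y) \<le> (\<Sum>y\<in>UNIV. K x y * v y)"
  by (intro sum_mono mult_left_mono assms) (auto intro: less_imp_le K_pos)

lemma K_mult_w_pos: "(\<Sum>y\<in>UNIV. K x y * w y) > 0"
  by (intro sum_pos) (auto intro: mult_pos_pos K_pos w_pos)

lemma K_mult_pos:
  assumes "\<And>y. w y \<le> v y"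
  shows "(\<Sum>y\<in>UNIV. K x y * v y) > 0"
  using K_mult_mono[OF assms, of x] K_mult_w_pos[of x] by linarith

lemma sk_step_ge:
  assumes ge: "\<And>y. w y \<le> v y"
  shows "w y \<le> sk_step K \<mu> \<nu> v y"
proof -
  let ?u = "sk_u K \<mu> v"
  \<comment> \<open>v above the fixed point forces the row update below u, hence the column update above w\<close>
  have u_le: "?u x \<le> u x" for x
  proof -
    have "u x = \<mu> x / (\<Sum>y\<in>UNIV. K x y * w y)"
      using row_marginal[of x] K_mult_w_pos[of x] by (simp add: eq_divide_eq)
    moreover have "\<mu> x / (\<Sum>y\<in>UNIV. K x y * v y) \<le> \<mu> x / (\<Sum>y\<in>UNIV. K x y * w y)"
      using K_mult_mono[OF ge, of x] K_mult_w_pos[of x] \<mu>_pos[of x]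
      by (intro divide_left_mono) (auto intro: less_imp_le mult_pos_pos)
    ultimately show ?thesis unfolding sk_u_def by simp
  qed
  have u_pos: "?u x > 0" for x
    unfolding sk_u_def using \<mu>_pos[of x] K_mult_pos[OF ge, of x] by simp
  have le: "(\<Sum>x\<in>UNIV. K x y * ?u x) \<le> (\<Sum>x\<in>UNIV. K x y * u x)"
    by (intro sum_mono mult_left_mono u_le) (auto intro: less_imp_le K_pos)
  have pos: "(\<Sum>x\<in>UNIV. K x y * ?u x) > 0"
    by (intro sum_pos) (auto intro: mult_pos_pos K_pos u_pos)
  have "w y = \<nu> y / (\<Sum>x\<in>UNIV. K x y * u x)"
    using col_marginal[of y] pos le by (simp add: eq_divide_eq)
  also have "\<dots> \<le> \<nu> y / (\<Sum>x\<in>UNIV. K x y * ?u x)"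
    using pos le \<nu>_pos[of y] by (intro divide_left_mono) (auto intro: less_imp_le mult_pos_pos)
  finally show ?thesis unfolding sk_step_def using ge[of y] by simp
qed

lemma sk_v_ge:
  assumes "\<And>y. w y \<le> v0 y"
  shows "w y \<le> sk_v K \<mu> \<nu> v0 n y"
  using assms by (induction n arbitrary: y) (auto intro: sk_step_ge)

lemma sk_potential_mono:
  assumes ge: "\<And>y. w y \<le> v y"
  shows "sk_potential K \<mu> w \<le> sk_potential K \<mu> v"
  unfolding sk_potential_def
proof (intro sum_mono mult_left_mono)
  fix x
  show "ln (\<Sum>y\<in>UNIV. K x y * w y) \<le> ln (\<Sum>y\<in>UNIV. K x y * v y)"
    using K_mult_mono[OF ge, of x] K_mult_w_pos[of x] by simp
  show "0 \<le> \<mu> x" using \<mu>_pos[of x] by simp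
qed

lemma sk_potential_decrease:
  assumes ge: "\<And>y. w y \<le> v y"
  shows "1 - (\<Sum>x\<in>UNIV. \<Sum>y\<in>UNIV. sk_u K \<mu> v x * K x y * sk_step K \<mu> \<nu> v y)
     \<le> sk_potential K \<mu> v - sk_potential K \<mu> (sk_step K \<mu> \<nu> v)"
proof -
  let ?v' = "sk_step K \<mu> \<nu> v"
  define a where "a x = (\<Sum>y\<in>UNIV. K x y * v y)" for x
  define b where "b x = (\<Sum>y\<in>UNIV. K x y * ?v' y)" for x
  have a_pos: "a x > 0" for x unfolding a_def by (rule K_mult_pos[OF ge])
  have b_pos: "b x > 0" for x unfolding b_def by (rule K_mult_pos[OF sk_step_ge[OF ge]])
  have mass: "(\<Sum>x\<in>UNIV. \<Sum>y\<in>UNIV. sk_u K \<mu> v x * K x y * ?v' y) = (\<Sum>x\<in>UNIV. \<mu> x * (b x / a x))"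
    unfolding sk_u_def a_def b_def by (simp add: sum_distrib_left sum_divide_distrib mult.assoc)
  have "\<mu> x * (1 - b x / a x) \<le> \<mu> x * ln (a x) - \<mu> x * ln (b x)" for x
  proof -
    have "ln (b x / a x) \<le> b x / a x - 1" using a_pos b_pos by (intro ln_le_minus_one) simp
    hence "1 - b x / a x \<le> ln (a x) - ln (b x)" using a_pos[of x] b_pos[of x] by (simp add: ln_div)
    hence "\<mu> x * (1 - b x / a x) \<le> \<mu> x * (ln (a x) - ln (b x))"
      using \<mu>_pos[of x] by (intro mult_left_mono) auto
    thus ?thesis by (simp add: right_diff_distrib)
  qed
  hence "(\<Sum>x\<in>UNIV. \<mu> x * (1 - b x / a x)) \<le> (\<Sum>x\<in>UNIV. \<mu> x * ln (a x) - \<mu> x * ln (b x))"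
    by (intro sum_mono)
  moreover have "(\<Sum>x\<in>UNIV. \<mu> x * (1 - b x / a x)) = 1 - (\<Sum>x\<in>UNIV. \<mu> x * (b x / a x))"
    using \<mu>_sum by (simp add: right_diff_distrib sum_subtractf)
  ultimately show ?thesis
    unfolding mass sk_potential_def a_def b_def by (simp add: sum_subtractf)
qed

lemma sk_potential_telescope:
  assumes ge: "\<And>y. w y \<le> v0 y"
  shows "(\<Sum>l<n. 1 - sk_q K \<mu> \<nu> v0 (Suc l))
           \<le> sk_potential K \<mu> v0 - sk_potential K \<mu> (sk_v K \<mu> \<nu> v0 n)"
proof (induction n)
  case (Suc n)
  have "1 - sk_q K \<mu> \<nu> v0 (Suc n)
      \<le> sk_potential K \<mu> (sk_v K \<mu> \<nu> v0 n) - sk_potential K \<mu> (sk_v K \<mu> \<nu> v0 (Suc n))"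
    unfolding sk_q_def sk_uu_def using sk_potential_decrease[OF sk_v_ge[OF ge, of _ n]] by simp
  with Suc show ?case by simp
qed simp

theorem sk_q_reaches_target:
  assumes ge: "\<And>y. w y \<le> v0 y"
    and gap: "sk_potential K \<mu> v0 - sk_potential K \<mu> w \<le> B" and qt: "qt < 1"
  shows "\<exists>n. 1 \<le> n \<and> real n \<le> B / (1 - qt) + 1 \<and> qt \<le> sk_q K \<mu> \<nu> v0 n"
proof (rule ccontr)
  assume no: "\<not> ?thesis"
  have B: "B \<ge> 0" using gap sk_potential_mono[OF ge] by linarith
  define n where "n = nat \<lfloor>B / (1 - qt)\<rfloor> + 1"
  have "real n = of_int \<lfloor>B / (1 - qt)\<rfloor> + 1" unfolding n_def using B qt by simp
  hence n_gt: "B / (1 - qt) < real n" and n_le: "real n \<le> B / (1 - qt) + 1"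
    by linarith+
  have small: "sk_q K \<mu> \<nu> v0 (Suc l) < qt" if "l < n" for l
  proof -
    have "real (Suc l) \<le> B / (1 - qt) + 1" using that n_le by linarith
    moreover have "1 \<le> Suc l" by simp
    ultimately show ?thesis using no by (meson not_le)
  qed
  have "real n * (1 - qt) = (\<Sum>l<n. 1 - qt)" by simp
  also have "\<dots> < (\<Sum>l<n. 1 - sk_q K \<mu> \<nu> v0 (Suc l))"
    using small by (intro sum_strict_mono) (auto simp: n_def)
  also have "\<dots> \<le> sk_potential K \<mu> v0 - sk_potential K \<mu> (sk_v K \<mu> \<nu> v0 n)"
    by (rule sk_potential_telescope[OF ge])
  also have "\<dots> \<le> B" using gap sk_potential_mono[OF sk_v_ge[OF ge, of _ n]] by linarith
  finally have "real n < B / (1 - qt)" using qt by (simp add: field_simps)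
  with n_gt show False by simp
qed

end

section \<open>Marginals with a common denominator\<close>

locale rational_marginals =
  fixes M :: nat and r :: "'x::finite \<Rightarrow> int" and s :: "'y::finite \<Rightarrow> int"
    and \<mu> :: "'x \<Rightarrow> real" and \<nu> :: "'y \<Rightarrow> real"
  assumes M_pos: "M > 0" and r_pos: "\<And>x. r x > 0" and s_pos: "\<And>y. s y > 0"
    and r_sum: "(\<Sum>x\<in>UNIV. r x) = int M" and s_sum: "(\<Sum>y\<in>UNIV. s y) = int M"
    and \<mu>_def: "\<And>x. \<mu> x = real_of_int (r x) / real M"
    and \<nu>_def: "\<And>y. \<nu> y = real_of_int (s y) / real M"
begin

lemma \<mu>_ge: "1 / real M \<le> \<mu> x"
  using r_pos[of x] M_pos unfolding \<mu>_def by (simp add: divide_right_mono)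

lemma \<nu>_ge: "1 / real M \<le> \<nu> y"
  using s_pos[of y] M_pos unfolding \<nu>_def by (simp add: divide_right_mono)

lemma \<mu>_pos: "\<mu> x > 0"
  using r_pos[of x] M_pos unfolding \<mu>_def by simp

lemma \<nu>_pos: "\<nu> y > 0"
  using s_pos[of y] M_pos unfolding \<nu>_def by simp

lemma \<mu>_sum: "(\<Sum>x\<in>UNIV. \<mu> x) = 1"
  using r_sum M_pos unfolding \<mu>_def sum_divide_distrib[symmetric]
  by (metis of_int_of_nat_eq of_int_sum of_nat_0_less_iff less_irrefl divide_self)

lemma \<nu>_sum: "(\<Sum>y\<in>UNIV. \<nu> y) = 1"
  using s_sum M_pos unfolding \<nu>_def sum_divide_distrib[symmetric]
  by (metis of_int_of_nat_eq of_int_sum of_nat_0_less_iff less_irrefl divide_self)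

lemma \<mu>\<nu>_le_1: "\<mu> x * \<nu> y \<le> 1"
proof -
  have "\<mu> x \<le> 1" using member_le_sum[of x UNIV \<mu>] \<mu>_sum \<mu>_pos less_imp_le by auto
  moreover have "\<nu> y \<le> 1" using member_le_sum[of y UNIV \<nu>] \<nu>_sum \<nu>_pos less_imp_le by auto
  ultimately show ?thesis using \<nu>_pos[of y] by (simp add: mult_le_one)
qed

lemma block_sum_product_le_1: "block_sum (\<lambda>x y. \<mu> x * \<nu> y) A B \<le> 1"
proof -
  have "block_sum (\<lambda>x y. \<mu> x * \<nu> y) A B \<le> block_sum (\<lambda>x y. \<mu> x * \<nu> y) UNIV UNIV"
    using \<mu>_pos \<nu>_pos
    by (intro order.trans[OF sum_mono[OF sum_mono2] sum_mono2])
      (auto intro!: less_imp_le sum_nonneg mult_nonneg_nonneg)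
  thus ?thesis using \<mu>_sum \<nu>_sum by (simp add: sum_product[symmetric])
qed

lemma cut_difference_multiple: "\<exists>k::int. (\<Sum>y\<in>R. \<nu> y) - (\<Sum>x\<in>Q. \<mu> x) = k / real M"
  by (rule exI[of _ "(\<Sum>y\<in>R. s y) - (\<Sum>x\<in>Q. r x)"])
     (simp add: \<mu>_def \<nu>_def sum_divide_distrib[symmetric] diff_divide_distrib)

lemma gibbs_pos: "gibbs \<mu> \<nu> e \<sigma> x y > 0"
  unfolding gibbs_def using \<mu>_pos \<nu>_pos by simp

lemma gibbs_le_block_sum:
  assumes "x \<in> A" "y \<in> B"
  shows "gibbs \<mu> \<nu> e \<sigma> x y \<le> block_sum (gibbs \<mu> \<nu> e \<sigma>) A B"
  using assms by (intro block_sum_ge_member) (auto intro: less_imp_le gibbs_pos)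

lemma gibbs_block_sum_nonneg: "0 \<le> block_sum (gibbs \<mu> \<nu> e \<sigma>) A B"
  by (intro sum_nonneg) (simp add: gibbs_pos less_imp_le)

lemma gibbs_slack_lower:
  assumes "coupling \<mu> \<nu> (gibbs \<mu> \<nu> e \<sigma>)" "e > 0"
  shows "- \<sigma> x y \<le> e * ln (real M)"
proof -
  have "gibbs \<mu> \<nu> e \<sigma> x y \<le> \<mu> x"
    using assms(1) member_le_sum[of y UNIV "gibbs \<mu> \<nu> e \<sigma> x"] gibbs_pos
    unfolding coupling_def by (simp add: less_imp_le)
  hence "exp (- \<sigma> x y / e) \<le> 1 / \<nu> y"
    using \<mu>_pos[of x] \<nu>_pos[of y] by (simp add: gibbs_def field_simps)
  also have "\<dots> \<le> real M" using \<nu>_ge[of y] \<nu>_pos[of y] M_pos by (simp add: field_simps)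
  finally have "- \<sigma> x y / e \<le> ln (real M)" using M_pos by (subst ln_ge_iff) auto
  hence "e * (- \<sigma> x y / e) \<le> e * ln (real M)" using assms(2) by (intro mult_left_mono) auto
  thus ?thesis using assms(2) by simp
qed

lemma gibbs_block_mass_lower:
  assumes "\<And>x y. x \<in> A \<Longrightarrow> y \<in> B \<Longrightarrow> - \<sigma> x y \<le> L" and "e > 0"
    and "1 / real M \<le> block_sum (gibbs \<mu> \<nu> e \<sigma>) A B"
  shows "- e * ln (real M) \<le> L"
proof -
  have "block_sum (gibbs \<mu> \<nu> e \<sigma>) A B \<le> exp (- 0 / e) * block_sum (gibbs \<mu> \<nu> e (\<lambda>_ _. - L)) A B"
    using assms(1,2) \<mu>_pos \<nu>_pos by (intro gibbs_block_shift) (force intro: less_imp_le)+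
  also have "\<dots> = exp (L / e) * block_sum (\<lambda>x y. \<mu> x * \<nu> y) A B"
    by (simp add: gibbs_def sum_distrib_left mult_ac)
  also have "\<dots> \<le> exp (L / e)" using block_sum_product_le_1 by (simp add: mult_left_le)
  finally have "1 / real M \<le> exp (L / e)" using assms(3) by linarith
  hence "ln (1 / real M) \<le> ln (exp (L / e))" using M_pos by (intro ln_mono) auto
  hence "- ln (real M) \<le> L / e" using M_pos by (simp add: ln_div)
  hence "e * - ln (real M) \<le> e * (L / e)" using assms(2) by (intro mult_left_mono) auto
  thus ?thesis using assms(2) by simp
qed

lemma gibbs_block_temperature_upper:
  assumes e: "0 < e2" "e2 \<le> e1" and S: "block_sum (gibbs \<mu> \<nu> e2 \<sigma>) A B > 0"
  shows "block_sum (gibbs \<mu> \<nu> e1 \<sigma>) A B \<le> block_sum (gibbs \<mu> \<nu> e2 \<sigma>) A B powr (e2 / e1)"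
proof -
  define \<theta> where "\<theta> = e2 / e1"
  define S where "S = block_sum (gibbs \<mu> \<nu> e2 \<sigma>) A B"
  have \<theta>: "0 < \<theta>" "\<theta> \<le> 1" using e unfolding \<theta>_def by auto
  \<comment> \<open>Jensen's inequality for the concave map t \<mapsto> t powr \<theta>, in tangent-line form\<close>
  have "gibbs \<mu> \<nu> e1 \<sigma> x y \<le> S powr \<theta> * (\<theta> / S * gibbs \<mu> \<nu> e2 \<sigma> x y + (1 - \<theta>) * (\<mu> x * \<nu> y))"
    for x y
  proof -
    define u where "u = - \<sigma> x y / e2"
    have "exp (- \<sigma> x y / e1) = S powr \<theta> * exp (\<theta> * (u - ln S))"
      using e S unfolding u_def \<theta>_def S_def powr_def by (simp add: exp_add[symmetric] field_simps)
    also have "\<dots> \<le> S powr \<theta> * (\<theta> * (exp u / S) + (1 - \<theta>))"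
      using exp_scaled_le_convex_comb[of \<theta> "u - ln S"] \<theta> S
      by (intro mult_left_mono) (auto simp: exp_diff S_def)
    finally have "\<mu> x * \<nu> y * exp (- \<sigma> x y / e1)
        \<le> \<mu> x * \<nu> y * (S powr \<theta> * (\<theta> * (exp u / S) + (1 - \<theta>)))"
      using \<mu>_pos[of x] \<nu>_pos[of y] by (intro mult_left_mono) auto
    thus ?thesis unfolding gibbs_def u_def by (simp add: algebra_simps)
  qed
  hence "block_sum (gibbs \<mu> \<nu> e1 \<sigma>) A B
      \<le> block_sum (\<lambda>x y. S powr \<theta> * (\<theta> / S * gibbs \<mu> \<nu> e2 \<sigma> x y + (1 - \<theta>) * (\<mu> x * \<nu> y))) A B"
    by (intro sum_mono)
  also have "\<dots> = S powr \<theta> * (\<theta> / S * block_sum (gibbs \<mu> \<nu> e2 \<sigma>) A B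
                       + (1 - \<theta>) * block_sum (\<lambda>x y. \<mu> x * \<nu> y) A B)"
    by (simp add: distrib_left sum.distrib sum_distrib_left sum_divide_distrib)
  also have "\<dots> = S powr \<theta> * (\<theta> + (1 - \<theta>) * block_sum (\<lambda>x y. \<mu> x * \<nu> y) A B)"
    using S by (simp add: S_def[symmetric])
  also have "\<dots> \<le> S powr \<theta> * (\<theta> + (1 - \<theta>) * 1)"
    using \<theta> block_sum_product_le_1 by (intro mult_left_mono add_left_mono) auto
  finally show ?thesis unfolding S_def \<theta>_def by simp
qed

lemma gibbs_temperature_lower:
  assumes e: "0 < e2" "e2 \<le> e1"
  shows "gibbs \<mu> \<nu> e2 \<sigma> x y powr (e2 / e1) / (real M)\<^sup>2 \<le> gibbs \<mu> \<nu> e1 \<sigma> x y"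
proof -
  define \<theta> where "\<theta> = e2 / e1"
  have \<theta>: "0 < \<theta>" "\<theta> \<le> 1" using e unfolding \<theta>_def by auto
  have "(\<mu> x * \<nu> y) powr \<theta> \<le> 1"
    using \<theta> \<mu>\<nu>_le_1[of x y] \<mu>_pos[of x] \<nu>_pos[of y] by (intro powr_le1) auto
  hence "(\<mu> x * \<nu> y) powr \<theta> / (real M)\<^sup>2 \<le> 1 / (real M)\<^sup>2" by (intro divide_right_mono) auto
  also have "\<dots> = (1 / real M) * (1 / real M)" by (simp add: power2_eq_square)
  also have "\<dots> \<le> \<mu> x * \<nu> y" using \<mu>_ge \<nu>_ge \<mu>_pos[of x] by (intro mult_mono) auto
  finally have w: "(\<mu> x * \<nu> y) powr \<theta> / (real M)\<^sup>2 \<le> \<mu> x * \<nu> y" .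
  have "gibbs \<mu> \<nu> e2 \<sigma> x y powr \<theta> = (\<mu> x * \<nu> y) powr \<theta> * exp (- \<sigma> x y / e1)"
    using e unfolding gibbs_def \<theta>_def by (simp add: powr_mult exp_powr_real)
  thus ?thesis
    using mult_right_mono[OF w, of "exp (- \<sigma> x y / e1)"] unfolding gibbs_def \<theta>_def
    by (simp add: mult_ac)
qed

lemma gibbs_temperature_upper:
  assumes "coupling \<mu> \<nu> (gibbs \<mu> \<nu> e1 \<sigma>)" "0 < e2" "e2 \<le> e1"
  shows "gibbs \<mu> \<nu> e2 \<sigma> x y \<le> exp ((e1 / e2 - 1) * ln (real M)) * gibbs \<mu> \<nu> e1 \<sigma> x y"
proof -
  have "- \<sigma> x y \<le> e1 * ln (real M)" using assms by (intro gibbs_slack_lower) auto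
  hence "- \<sigma> x y * (1 / e2 - 1 / e1) \<le> e1 * ln (real M) * (1 / e2 - 1 / e1)"
    using assms by (intro mult_right_mono) (auto simp: field_simps)
  moreover have "- \<sigma> x y / e2 = - \<sigma> x y * (1 / e2 - 1 / e1) + - \<sigma> x y / e1"
    and "e1 * ln (real M) * (1 / e2 - 1 / e1) = (e1 / e2 - 1) * ln (real M)"
    using assms by (simp_all add: field_simps)
  ultimately have "- \<sigma> x y / e2 \<le> (e1 / e2 - 1) * ln (real M) + - \<sigma> x y / e1"
    by linarith
  hence "exp (- \<sigma> x y / e2) \<le> exp ((e1 / e2 - 1) * ln (real M)) * exp (- \<sigma> x y / e1)"
    by (simp add: exp_add[symmetric])
  thus ?thesis
    unfolding gibbs_def using \<mu>_pos[of x] \<nu>_pos[of y] mult_left_mono[of _ _ "\<mu> x * \<nu> y"]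
    by (simp add: mult_ac)
qed

lemma gibbs_block_temperature_lower:
  assumes e: "0 < e2" "e2 \<le> e1"
    and card: "card (UNIV :: 'x set) \<le> N" "card (UNIV :: 'y set) \<le> N"
    and nonempty: "x0 \<in> A" "y0 \<in> B"
  shows "block_sum (gibbs \<mu> \<nu> e2 \<sigma>) A B powr (e2 / e1) / ((real M)\<^sup>2 * (real N)\<^sup>2)
           \<le> block_sum (gibbs \<mu> \<nu> e1 \<sigma>) A B"
proof -
  define \<theta> where "\<theta> = e2 / e1"
  define S where "S = block_sum (gibbs \<mu> \<nu> e2 \<sigma>) A B"
  have \<theta>: "0 < \<theta>" "\<theta> \<le> 1" using e unfolding \<theta>_def by auto
  have N: "1 \<le> real N" using one_le_bound_of_card_UNIV[OF card(1)] .
  have S_pos: "S > 0"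
    using gibbs_le_block_sum[OF nonempty, where e = e2 and \<sigma> = \<sigma>] gibbs_pos[of e2 \<sigma> x0 y0] unfolding S_def by simp
  obtain x y where xy: "x \<in> A" "y \<in> B" and heavy: "S / (real N)\<^sup>2 \<le> gibbs \<mu> \<nu> e2 \<sigma> x y"
    using sum2_exists_ge_average[of A B x0 y0 N "gibbs \<mu> \<nu> e2 \<sigma>"] nonempty card
      card_mono[of UNIV A] card_mono[of UNIV B] gibbs_pos
    unfolding S_def by (force intro: less_imp_le)
  have "S powr \<theta> / ((real M)\<^sup>2 * (real N)\<^sup>2) \<le> (S / (real N)\<^sup>2) powr \<theta> / (real M)\<^sup>2"
  proof -
    have "(real N)\<^sup>2 powr \<theta> \<le> (real N)\<^sup>2 powr 1"
      using N \<theta> by (intro powr_mono) auto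
    thus ?thesis using S_pos N M_pos
      by (simp add: powr_divide field_simps mult_left_mono)
  qed
  also have "\<dots> \<le> gibbs \<mu> \<nu> e2 \<sigma> x y powr \<theta> / (real M)\<^sup>2"
    using heavy S_pos \<theta> by (intro divide_right_mono powr_mono2) auto
  also have "\<dots> \<le> gibbs \<mu> \<nu> e1 \<sigma> x y"
    unfolding \<theta>_def using e by (intro gibbs_temperature_lower) auto
  also have "\<dots> \<le> block_sum (gibbs \<mu> \<nu> e1 \<sigma>) A B"
    using xy by (rule gibbs_le_block_sum)
  finally show ?thesis unfolding S_def \<theta>_def .
qed

lemma balanced_cut_gap:
  assumes e: "0 < e2" "e2 < e1"
    and card: "card (UNIV :: 'x set) \<le> N" "card (UNIV :: 'y set) \<le> N"
    and cpl1: "coupling \<mu> \<nu> (gibbs \<mu> \<nu> e1 \<sigma>1)" and cpl2: "coupling \<mu> \<nu> (gibbs \<mu> \<nu> e2 \<sigma>2)"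
    and cut1: "\<And>x y. x \<notin> Q \<Longrightarrow> y \<in> R \<Longrightarrow> \<sigma>1 x y + g \<le> \<sigma>2 x y"
    and cut2: "\<And>x y. x \<in> Q \<Longrightarrow> y \<notin> R \<Longrightarrow> \<sigma>2 x y + g \<le> \<sigma>1 x y"
    and balanced: "(\<Sum>y\<in>R. \<nu> y) = (\<Sum>x\<in>Q. \<mu> x)"
    and nonempty: "x0 \<notin> Q" "y0 \<in> R"
  shows "g \<le> e1 * (ln (real M) + ln (real N))"
proof -
  define S where "S = block_sum (gibbs \<mu> \<nu> e2 \<sigma>2) (- Q) R"
  define t where "t = exp (- g / e1)"
  have N: "1 \<le> real N" using one_le_bound_of_card_UNIV[OF card(1)] .
  have S_pos: "S > 0"
    using gibbs_le_block_sum[where x = x0 and A = "- Q" and y = y0 and B = R and e = e2 and \<sigma> = \<sigma>2] nonempty gibbs_pos[of e2 \<sigma>2 x0 y0]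
    unfolding S_def by simp
  have S_other: "block_sum (gibbs \<mu> \<nu> e2 \<sigma>2) Q (- R) = S"
    using coupling_cut_balance[OF cpl2, where Q = Q and R = R] balanced unfolding S_def by simp
  have flow1: "block_sum (gibbs \<mu> \<nu> e1 \<sigma>1) (- Q) R = block_sum (gibbs \<mu> \<nu> e1 \<sigma>1) Q (- R)"
    using coupling_cut_balance[OF cpl1, where Q = Q and R = R] balanced by simp
  \<comment> \<open>push the e1-mass of the cut across it and back, gaining the factor t each time\<close>
  have "S powr (e2 / e1) / ((real M)\<^sup>2 * (real N)\<^sup>2) \<le> block_sum (gibbs \<mu> \<nu> e1 \<sigma>2) (- Q) R"
    unfolding S_def using e card nonempty by (intro gibbs_block_temperature_lower) auto
  also have "\<dots> \<le> t * block_sum (gibbs \<mu> \<nu> e1 \<sigma>1) Q (- R)"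
    unfolding t_def flow1[symmetric] using cut1 e \<mu>_pos \<nu>_pos
    by (intro gibbs_block_shift) (auto intro: less_imp_le)
  also have "\<dots> \<le> t * (t * block_sum (gibbs \<mu> \<nu> e1 \<sigma>2) Q (- R))"
    unfolding t_def using cut2 e \<mu>_pos \<nu>_pos
    by (intro mult_left_mono gibbs_block_shift) (auto intro: less_imp_le)
  also have "\<dots> \<le> t * (t * S powr (e2 / e1))"
    using gibbs_block_temperature_upper[where ?e2.0 = e2 and ?e1.0 = e1 and \<sigma> = \<sigma>2 and A = Q and B = "- R"] S_other S_pos e
    unfolding t_def by (intro mult_left_mono) auto
  finally have "1 \<le> ((real M)\<^sup>2 * (real N)\<^sup>2) * (t * t)"
    using S_pos M_pos N by (simp add: field_simps)
  hence "exp (g / e1) * exp (g / e1) \<le> (real M * real N)\<^sup>2"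
    unfolding t_def by (simp add: exp_minus field_simps)
  hence "exp (g / e1 + g / e1) \<le> (real M * real N)\<^sup>2" by (simp only: exp_add)
  hence "g / e1 + g / e1 \<le> ln ((real M * real N)\<^sup>2)" using M_pos N by (subst ln_ge_iff) auto
  hence "g / e1 \<le> ln (real M) + ln (real N)"
    using M_pos N by (simp add: ln_mult ln_realpow)
  thus ?thesis using e by (simp add: divide_le_eq mult.commute)
qed

lemma heavy_cut_gap:
  assumes cpl: "coupling \<mu> \<nu> (gibbs \<mu> \<nu> e \<sigma>)" and e: "e > 0" "e' > 0"
    and cut: "\<And>x y. x \<in> A \<Longrightarrow> y \<in> B \<Longrightarrow> \<sigma> x y + g \<le> \<sigma>' x y"
    and heavy: "1 / real M \<le> block_sum (gibbs \<mu> \<nu> e' \<sigma>') A B"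
  shows "g \<le> (e + e') * ln (real M)"
proof -
  have "- \<sigma>' x y \<le> e * ln (real M) - g" if "x \<in> A" "y \<in> B" for x y
    using cut[OF that] gibbs_slack_lower[OF cpl e(1), of x y] by linarith
  hence "- e' * ln (real M) \<le> e * ln (real M) - g"
    using e heavy by (intro gibbs_block_mass_lower) auto
  thus ?thesis by (simp add: algebra_simps)
qed

lemma cut_gap_le:
  assumes e: "0 < e2" "e2 < e1"
    and card: "card (UNIV :: 'x set) \<le> N" "card (UNIV :: 'y set) \<le> N"
    and cpl1: "coupling \<mu> \<nu> (gibbs \<mu> \<nu> e1 \<sigma>1)" and cpl2: "coupling \<mu> \<nu> (gibbs \<mu> \<nu> e2 \<sigma>2)"
    and cut1: "\<And>x y. x \<notin> Q \<Longrightarrow> y \<in> R \<Longrightarrow> \<sigma>1 x y + g \<le> \<sigma>2 x y"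
    and cut2: "\<And>x y. x \<in> Q \<Longrightarrow> y \<notin> R \<Longrightarrow> \<sigma>2 x y + g \<le> \<sigma>1 x y"
    and separating: "y1 \<in> R" "y0 \<notin> R"
  shows "g \<le> e1 * (2 * ln (real M) + ln (real N))"
proof -
  have ln_M: "0 \<le> ln (real M)" using M_pos by simp
  have ln_N: "0 \<le> ln (real N)" using one_le_bound_of_card_UNIV[OF card(1)] by simp
  have unbalanced_bound: "(e1 + e2) * ln (real M) \<le> e1 * (2 * ln (real M) + ln (real N))"
  proof -
    have "e2 * ln (real M) \<le> e1 * ln (real M)" using e ln_M by (intro mult_right_mono) auto
    moreover have "0 \<le> e1 * ln (real N)" using e ln_N by simp
    ultimately show ?thesis by (simp add: algebra_simps)
  qed
  obtain k :: int where k: "(\<Sum>y\<in>R. \<nu> y) - (\<Sum>x\<in>Q. \<mu> x) = k / real M"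
    using cut_difference_multiple by blast
  note flow1 = coupling_cut_balance[OF cpl1, where Q = Q and R = R]
  note flow2 = coupling_cut_balance[OF cpl2, where Q = Q and R = R]
  consider "1 \<le> k" | "k \<le> -1" | "k = 0" by linarith
  then show ?thesis
  proof cases
    case 1
    hence "1 / real M \<le> k / real M" using M_pos by (simp add: divide_right_mono)
    hence "1 / real M \<le> block_sum (gibbs \<mu> \<nu> e2 \<sigma>2) (- Q) R"
      using flow2 k gibbs_block_sum_nonneg[where e = e2 and \<sigma> = \<sigma>2 and A = Q and B = "- R"] by linarith
    hence "g \<le> (e1 + e2) * ln (real M)"
      using cut1 e by (intro heavy_cut_gap[OF cpl1]) auto
    thus ?thesis using unbalanced_bound by linarith
  next
    case 2
    hence "k / real M \<le> - 1 / real M" using M_pos by (intro divide_right_mono) auto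
    hence "1 / real M \<le> block_sum (gibbs \<mu> \<nu> e1 \<sigma>1) Q (- R)"
      using flow1 k gibbs_block_sum_nonneg[where e = e1 and \<sigma> = \<sigma>1 and A = "- Q" and B = R] by linarith
    hence "g \<le> (e2 + e1) * ln (real M)"
      using cut2 e by (intro heavy_cut_gap[OF cpl2]) auto
    thus ?thesis using unbalanced_bound by (simp add: add.commute)
  next
    case 3
    hence balanced: "(\<Sum>y\<in>R. \<nu> y) = (\<Sum>x\<in>Q. \<mu> x)" using k by simp
    obtain x0 where "x0 \<notin> Q"
    proof (cases "Q = UNIV")
      case True
      have "\<nu> y0 \<le> (\<Sum>y\<in>- R. \<nu> y)"
        using separating \<nu>_pos by (intro member_le_sum) (auto intro: less_imp_le)
      hence "(\<Sum>y\<in>R. \<nu> y) < 1" using \<nu>_sum sum_UNIV_split[of \<nu> R] \<nu>_pos[of y0] by linarith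
      with balanced True \<mu>_sum show ?thesis by simp
    qed auto
    hence "g \<le> e1 * (ln (real M) + ln (real N))"
      using balanced_cut_gap[OF e card cpl1 cpl2 cut1 cut2 balanced _ separating(1)] by blast
    moreover have "e1 * (ln (real M) + ln (real N)) \<le> e1 * (2 * ln (real M) + ln (real N))"
      using e ln_M by (intro mult_left_mono) auto
    ultimately show ?thesis by linarith
  qed
qed

end

section \<open>The warm-started iteration\<close>

locale warm_started_sinkhorn = rational_marginals M r s \<mu> \<nu>
  for M :: nat and r :: "'x::finite \<Rightarrow> int" and s :: "'y::finite \<Rightarrow> int"
    and \<mu> :: "'x \<Rightarrow> real" and \<nu> :: "'y \<Rightarrow> real" +
  fixes c :: "'x \<Rightarrow> 'y \<Rightarrow> real" and N :: nat and \<epsilon>1 \<epsilon>2 :: real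
    and \<alpha>1 \<alpha>2 :: "'x \<Rightarrow> real" and \<beta>1 \<beta>2 :: "'y \<Rightarrow> real"
  assumes card_X: "card (UNIV :: 'x set) \<le> N" and card_Y: "card (UNIV :: 'y set) \<le> N"
    and \<epsilon>: "0 < \<epsilon>2" "\<epsilon>2 < \<epsilon>1"
    and max1: "\<And>\<alpha> \<beta>. Jfun \<epsilon>1 c \<mu> \<nu> \<alpha> \<beta> \<le> Jfun \<epsilon>1 c \<mu> \<nu> \<alpha>1 \<beta>1"
    and max2: "\<And>\<alpha> \<beta>. Jfun \<epsilon>2 c \<mu> \<nu> \<alpha> \<beta> \<le> Jfun \<epsilon>2 c \<mu> \<nu> \<alpha>2 \<beta>2"
begin

lemma coupling1: "coupling \<mu> \<nu> (gibbs \<mu> \<nu> \<epsilon>1 (dual_slack c \<alpha>1 \<beta>1))"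
  using \<epsilon> \<mu>_pos \<nu>_pos max1 by (intro Jfun_maximizer_coupling) auto

lemma coupling2: "coupling \<mu> \<nu> (gibbs \<mu> \<nu> \<epsilon>2 (dual_slack c \<alpha>2 \<beta>2))"
  using \<epsilon> \<mu>_pos \<nu>_pos max2 by (intro Jfun_maximizer_coupling) auto

lemma dual_value_le:
  "(\<Sum>x\<in>UNIV. \<alpha>2 x * \<mu> x) + (\<Sum>y\<in>UNIV. \<beta>2 y * \<nu> y) \<le> (\<Sum>x\<in>UNIV. \<alpha>1 x * \<mu> x) + (\<Sum>y\<in>UNIV. \<beta>1 y * \<nu> y)"
proof -
  have total: "block_sum (gibbs \<mu> \<nu> e (dual_slack c \<alpha> \<beta>)) UNIV UNIV = 1"
    if "coupling \<mu> \<nu> (gibbs \<mu> \<nu> e (dual_slack c \<alpha> \<beta>))" for e \<alpha> \<beta>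
    using that \<mu>_sum unfolding coupling_def by simp
  have "block_sum (gibbs \<mu> \<nu> \<epsilon>1 (dual_slack c \<alpha>2 \<beta>2)) UNIV UNIV \<le> 1 powr (\<epsilon>2 / \<epsilon>1)"
    using gibbs_block_temperature_upper[of \<epsilon>2 \<epsilon>1 "dual_slack c \<alpha>2 \<beta>2" UNIV UNIV] \<epsilon>
      total[OF coupling2] by simp
  hence "\<epsilon>1 * block_sum (gibbs \<mu> \<nu> \<epsilon>1 (dual_slack c \<alpha>2 \<beta>2)) UNIV UNIV \<le> \<epsilon>1 * 1"
    using \<epsilon> by (intro mult_left_mono) auto
  thus ?thesis
    using max1[of \<alpha>2 \<beta>2] total[OF coupling1] unfolding Jfun_gibbs_form by (simp add: algebra_simps)
qed

lemma beta_gap_oscillation: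
  "(\<beta>1 y - \<beta>2 y) - (\<beta>1 y' - \<beta>2 y') \<le> (2 * real N + 1) * (\<epsilon>1 * (2 * ln (real M) + ln (real N)))"
proof -
  define D where "D y = \<beta>1 y - \<beta>2 y" for y
  define h where "h = \<epsilon>1 * (2 * ln (real M) + ln (real N))"
  define S where "S = range D \<union> range (\<lambda>x. \<alpha>2 x - \<alpha>1 x)"
  have h: "0 \<le> h"
    unfolding h_def using \<epsilon> M_pos one_le_bound_of_card_UNIV[OF card_X] by simp
  have "card S \<le> card (range D) + card (range (\<lambda>x. \<alpha>2 x - \<alpha>1 x))"
    unfolding S_def by (rule card_Un_le)
  also have "\<dots> \<le> 2 * N"
    using card_image_le[of UNIV D] card_image_le[of UNIV "\<lambda>x. \<alpha>2 x - \<alpha>1 x"] card_X card_Y by simp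
  finally have card_S: "real (card S) + 1 \<le> 2 * real N + 1" by simp
  \<comment> \<open>an interval (t, t + g) free of values of \<beta>1 - \<beta>2 and \<alpha>2 - \<alpha>1 yields a cut
      across which the two slacks differ by at least g\<close>
  have "D y - D y' \<le> (real (card S) + 1) * h"
  proof (rule gap_free_interval_le)
    fix t g assume t: "D y' \<le> t" "t + g \<le> D y" "h < g"
    show "\<exists>s\<in>S. t < s \<and> s < t + g"
    proof (rule ccontr)
      assume no: "\<not> ?thesis"
      have outside: "v \<le> t \<or> t + g \<le> v" if "v \<in> S" for v using no that by force
      let ?R = "{y. t + g \<le> D y}" and ?Q = "{x. t + g \<le> \<alpha>2 x - \<alpha>1 x}"
      have "g \<le> h" unfolding h_def
      proof (rule cut_gap_le[OF \<epsilon> card_X card_Y coupling1 coupling2, where ?y1.0 = y and ?y0.0 = y'])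
        fix x y assume "x \<notin> ?Q" "y \<in> ?R"
        thus "dual_slack c \<alpha>1 \<beta>1 x y + g \<le> dual_slack c \<alpha>2 \<beta>2 x y"
          using outside[of "\<alpha>2 x - \<alpha>1 x"] unfolding S_def D_def dual_slack_def by auto
      next
        fix x y assume "x \<in> ?Q" "y \<notin> ?R"
        thus "dual_slack c \<alpha>2 \<beta>2 x y + g \<le> dual_slack c \<alpha>1 \<beta>1 x y"
          using outside[of "D y"] unfolding S_def D_def dual_slack_def by auto
      qed (use t h in auto)
      with t show False by simp
    qed
  qed (use h in \<open>auto simp: S_def\<close>)
  also have "\<dots> \<le> (2 * real N + 1) * h" using card_S h by (rule mult_right_mono)
  finally show ?thesis unfolding D_def h_def .
qed

abbreviation K :: "'x \<Rightarrow> 'y \<Rightarrow> real" where "K \<equiv> Kern \<epsilon>2 c \<mu> \<nu>"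

(* the largest shift of beta2 that keeps the fixed point v_star below the warm start *)
definition \<kappa> :: real where "\<kappa> = Min (range (\<lambda>y. \<beta>1 y - \<beta>2 y))"

definition v_star :: "'y \<Rightarrow> real" where "v_star y = exp ((\<beta>2 y + \<kappa>) / \<epsilon>2)"

definition u_star :: "'x \<Rightarrow> real" where "u_star x = exp ((\<alpha>2 x - \<kappa>) / \<epsilon>2)"

lemma \<kappa>_le: "\<kappa> \<le> \<beta>1 y - \<beta>2 y"
  unfolding \<kappa>_def by (rule Min_le) auto

lemma \<kappa>_attained: obtains y0 where "\<kappa> = \<beta>1 y0 - \<beta>2 y0"
proof -
  have "\<kappa> \<in> range (\<lambda>y. \<beta>1 y - \<beta>2 y)" unfolding \<kappa>_def by (rule Min_in) auto
  thus ?thesis using that by blast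
qed

lemma u_star_K_v_star: "u_star x * (K x y * v_star y) = gibbs \<mu> \<nu> \<epsilon>2 (dual_slack c \<alpha>2 \<beta>2) x y"
proof -
  have "(\<alpha>2 x - \<kappa>) / \<epsilon>2 + (\<beta>2 y + \<kappa>) / \<epsilon>2 = (\<alpha>2 x + \<beta>2 y) / \<epsilon>2"
    by (simp add: add_divide_distrib[symmetric])
  hence "u_star x * (K x y * v_star y) = K x y * exp ((\<alpha>2 x + \<beta>2 y) / \<epsilon>2)"
    unfolding u_star_def v_star_def by (simp add: exp_add[symmetric] mult_ac)
  thus ?thesis by (simp add: Kern_mult_exp gibbs_dual_slack)
qed

lemma fixed_point: "sinkhorn_fixed_point K \<mu> \<nu> v_star u_star"
proof
  show "u_star x * (\<Sum>y\<in>UNIV. K x y * v_star y) = \<mu> x" for x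
    using coupling2 unfolding coupling_def sum_distrib_left u_star_K_v_star by simp
  show "v_star y * (\<Sum>x\<in>UNIV. K x y * u_star x) = \<nu> y" for y
    using coupling2 u_star_K_v_star unfolding coupling_def sum_distrib_left by (simp add: mult_ac)
qed (use \<mu>_pos \<nu>_pos \<mu>_sum in \<open>auto simp: Kern_def v_star_def u_star_def\<close>)

lemma v_star_le_warm_start: "v_star y \<le> exp (\<beta>1 y / \<epsilon>2)"
  unfolding v_star_def using \<kappa>_le[of y] \<epsilon> by (simp add: divide_right_mono)

lemma K_warm_start_le:
  "(\<Sum>y\<in>UNIV. K x y * exp (\<beta>1 y / \<epsilon>2)) \<le> \<mu> x * exp (- \<alpha>1 x / \<epsilon>2 + (\<epsilon>1 / \<epsilon>2 - 1) * ln (real M))"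
proof -
  define L where "L = exp ((\<epsilon>1 / \<epsilon>2 - 1) * ln (real M))"
  have "K x y * exp (\<beta>1 y / \<epsilon>2) = exp (- \<alpha>1 x / \<epsilon>2) * gibbs \<mu> \<nu> \<epsilon>2 (dual_slack c \<alpha>1 \<beta>1) x y" for y
  proof -
    have "exp (\<beta>1 y / \<epsilon>2) = exp (- \<alpha>1 x / \<epsilon>2) * exp ((\<alpha>1 x + \<beta>1 y) / \<epsilon>2)"
      by (simp add: exp_add[symmetric] diff_divide_distrib[symmetric])
    thus ?thesis using Kern_mult_exp[of \<epsilon>2 c \<mu> \<nu> x y "\<alpha>1 x" "\<beta>1 y"]
      by (simp add: gibbs_dual_slack mult_ac)
  qed
  also have "\<dots> y \<le> exp (- \<alpha>1 x / \<epsilon>2) * (L * gibbs \<mu> \<nu> \<epsilon>1 (dual_slack c \<alpha>1 \<beta>1) x y)" for y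
    unfolding L_def using gibbs_temperature_upper[OF coupling1] \<epsilon> by (intro mult_left_mono) auto
  finally have "(\<Sum>y\<in>UNIV. K x y * exp (\<beta>1 y / \<epsilon>2))
      \<le> exp (- \<alpha>1 x / \<epsilon>2) * L * (\<Sum>y\<in>UNIV. gibbs \<mu> \<nu> \<epsilon>1 (dual_slack c \<alpha>1 \<beta>1) x y)"
    by (simp add: sum_mono sum_distrib_left mult.assoc)
  also have "\<dots> = \<mu> x * exp (- \<alpha>1 x / \<epsilon>2 + (\<epsilon>1 / \<epsilon>2 - 1) * ln (real M))"
    using coupling1 unfolding coupling_def L_def by (simp add: exp_add[symmetric])
  finally show ?thesis .
qed

lemma K_v_star: "(\<Sum>y\<in>UNIV. K x y * v_star y) = \<mu> x * exp ((\<kappa> - \<alpha>2 x) / \<epsilon>2)"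
proof -
  have "exp ((\<kappa> - \<alpha>2 x) / \<epsilon>2) * u_star x = 1"
    unfolding u_star_def by (simp add: exp_add[symmetric] add_divide_distrib[symmetric])
  hence "(\<Sum>y\<in>UNIV. K x y * v_star y)
      = exp ((\<kappa> - \<alpha>2 x) / \<epsilon>2) * (u_star x * (\<Sum>y\<in>UNIV. K x y * v_star y))"
    by (simp only: mult.assoc[symmetric] mult_1)
  thus ?thesis using sinkhorn_fixed_point.row_marginal[OF fixed_point, of x] by simp
qed

lemma potential_gap_le:
  "sk_potential K \<mu> (\<lambda>y. exp (\<beta>1 y / \<epsilon>2)) - sk_potential K \<mu> v_star
     \<le> ((\<Sum>x\<in>UNIV. (\<alpha>2 x - \<alpha>1 x) * \<mu> x) - \<kappa>) / \<epsilon>2 + (\<epsilon>1 / \<epsilon>2 - 1) * ln (real M)"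
proof -
  define L where "L = (\<epsilon>1 / \<epsilon>2 - 1) * ln (real M)"
  have "ln (\<Sum>y\<in>UNIV. K x y * exp (\<beta>1 y / \<epsilon>2)) - ln (\<Sum>y\<in>UNIV. K x y * v_star y)
      \<le> (\<alpha>2 x - \<alpha>1 x - \<kappa>) / \<epsilon>2 + L" for x
  proof -
    have "ln (\<Sum>y\<in>UNIV. K x y * exp (\<beta>1 y / \<epsilon>2)) \<le> ln (\<mu> x * exp (- \<alpha>1 x / \<epsilon>2 + L))"
      using K_warm_start_le[of x] sinkhorn_fixed_point.K_mult_pos[OF fixed_point v_star_le_warm_start]
      unfolding L_def by (intro ln_mono) auto
    thus ?thesis using \<mu>_pos[of x] unfolding K_v_star
      by (simp add: ln_mult diff_divide_distrib add_divide_distrib)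
  qed
  hence "sk_potential K \<mu> (\<lambda>y. exp (\<beta>1 y / \<epsilon>2)) - sk_potential K \<mu> v_star
      \<le> (\<Sum>x\<in>UNIV. \<mu> x * ((\<alpha>2 x - \<alpha>1 x - \<kappa>) / \<epsilon>2 + L))"
    unfolding sk_potential_def sum_subtractf[symmetric] right_diff_distrib[symmetric]
    using \<mu>_pos by (intro sum_mono mult_left_mono) (auto intro: less_imp_le)
  also have "\<dots> = (\<Sum>x\<in>UNIV. (\<alpha>2 x - \<alpha>1 x) * \<mu> x / \<epsilon>2 + \<mu> x * (L - \<kappa> / \<epsilon>2))"
    using \<epsilon> by (intro sum.cong) (auto simp: field_simps)
  also have "\<dots> = (\<Sum>x\<in>UNIV. (\<alpha>2 x - \<alpha>1 x) * \<mu> x) / \<epsilon>2 + (\<Sum>x\<in>UNIV. \<mu> x) * (L - \<kappa> / \<epsilon>2)"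
    by (simp add: sum.distrib sum_divide_distrib sum_distrib_right)
  finally show ?thesis unfolding L_def using \<mu>_sum by (simp add: diff_divide_distrib)
qed

lemma dual_gain_le_oscillation:
  "(\<Sum>x\<in>UNIV. (\<alpha>2 x - \<alpha>1 x) * \<mu> x) - \<kappa>
     \<le> (2 * real N + 1) * (\<epsilon>1 * (2 * ln (real M) + ln (real N)))"
proof -
  obtain y0 where y0: "\<kappa> = \<beta>1 y0 - \<beta>2 y0" by (rule \<kappa>_attained)
  have "(\<Sum>x\<in>UNIV. (\<alpha>2 x - \<alpha>1 x) * \<mu> x) - \<kappa> \<le> (\<Sum>y\<in>UNIV. (\<beta>1 y - \<beta>2 y - \<kappa>) * \<nu> y)"
    using dual_value_le \<nu>_sum
    by (simp add: left_diff_distrib sum_subtractf sum_distrib_left[symmetric] sum_distrib_right[symmetric])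
  also have "\<dots> \<le> (\<Sum>y\<in>UNIV. (2 * real N + 1) * (\<epsilon>1 * (2 * ln (real M) + ln (real N))) * \<nu> y)"
    using beta_gap_oscillation[of _ y0] \<nu>_pos unfolding y0
    by (intro sum_mono mult_right_mono) (auto intro: less_imp_le)
  also have "\<dots> = (2 * real N + 1) * (\<epsilon>1 * (2 * ln (real M) + ln (real N)))"
    using \<nu>_sum by (simp add: sum_distrib_left[symmetric])
  finally show ?thesis .
qed

lemma potential_gap_bound:
  "sk_potential K \<mu> (\<lambda>y. exp (\<beta>1 y / \<epsilon>2)) - sk_potential K \<mu> v_star
     \<le> \<epsilon>1 / \<epsilon>2 * (real N * (4 * ln (real N) + 24 * ln (real M)) + ln (real M))"
proof -
  define p where "p = \<epsilon>1 / \<epsilon>2"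
  have p: "1 \<le> p" unfolding p_def using \<epsilon> by simp
  have N: "1 \<le> real N" by (rule one_le_bound_of_card_UNIV[OF card_X])
  have ln_M: "0 \<le> ln (real M)" using M_pos by simp
  have "((\<Sum>x\<in>UNIV. (\<alpha>2 x - \<alpha>1 x) * \<mu> x) - \<kappa>) / \<epsilon>2
      \<le> (2 * real N + 1) * (\<epsilon>1 * (2 * ln (real M) + ln (real N))) / \<epsilon>2"
    using dual_gain_le_oscillation \<epsilon> by (intro divide_right_mono) auto
  also have "\<dots> = p * ((2 * real N + 1) * (2 * ln (real M) + ln (real N)))"
    unfolding p_def by simp
  finally have "sk_potential K \<mu> (\<lambda>y. exp (\<beta>1 y / \<epsilon>2)) - sk_potential K \<mu> v_star
      \<le> p * ((2 * real N + 1) * (2 * ln (real M) + ln (real N))) + (p - 1) * ln (real M)"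
    using potential_gap_le unfolding p_def by linarith
  also have "\<dots> \<le> p * (real N * (4 * ln (real N) + 24 * ln (real M)) + ln (real M))"
  proof -
    have "ln (real M) \<le> real N * ln (real M)" "ln (real N) \<le> real N * ln (real N)"
      using N ln_M mult_right_mono[OF N] by auto
    moreover have "0 \<le> real N * ln (real M)" "0 \<le> real N * ln (real N)" using N ln_M by auto
    moreover have "(2 * real N + 1) * (2 * ln (real M) + ln (real N))
        = 4 * (real N * ln (real M)) + 2 * (real N * ln (real N)) + 2 * ln (real M) + ln (real N)"
      and "real N * (4 * ln (real N) + 24 * ln (real M))
        = 4 * (real N * ln (real N)) + 24 * (real N * ln (real M))"
      by (simp_all add: algebra_simps)
    ultimately have "(2 * real N + 1) * (2 * ln (real M) + ln (real N))
        \<le> real N * (4 * ln (real N) + 24 * ln (real M))" by linarith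
    hence "p * ((2 * real N + 1) * (2 * ln (real M) + ln (real N)))
        \<le> p * (real N * (4 * ln (real N) + 24 * ln (real M)))"
      using p by (intro mult_left_mono) auto
    moreover have "(p - 1) * ln (real M) \<le> p * ln (real M)" using ln_M by (simp add: algebra_simps)
    ultimately show ?thesis by (simp only: distrib_left)
  qed
  finally show ?thesis unfolding p_def .
qed

theorem warm_start_iteration_bound:
  assumes qt: "0 < qt" "qt < 1"
  shows "\<exists>n. 1 \<le> n \<and>
     real n \<le> 2 + (\<epsilon>1 / \<epsilon>2) * ((real N * (4 * ln (real N) + 24 * ln (real M)) + ln (real M)) / (1 - qt)) \<and>
     qt \<le> sk_q K \<mu> \<nu> (\<lambda>y. exp (\<beta>1 y / \<epsilon>2)) n"
  using sinkhorn_fixed_point.sk_q_reaches_target[OF fixed_point v_star_le_warm_start potential_gap_bound qt(2)]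
  by auto

end

theorem mainTheorem10:
  fixes c :: "'x::finite \<Rightarrow> 'y::finite \<Rightarrow> real"
    and N M :: nat
    and r :: "'x \<Rightarrow> int" and s :: "'y \<Rightarrow> int"
    and \<mu> :: "'x \<Rightarrow> real" and \<nu> :: "'y \<Rightarrow> real"
    and \<epsilon>1 \<epsilon>2 qt :: real
    and \<alpha>1 \<alpha>2 :: "'x \<Rightarrow> real" and \<beta>1 \<beta>2 :: "'y \<Rightarrow> real"
  assumes cardX: "card (UNIV :: 'x set) \<le> N" and cardY: "card (UNIV :: 'y set) \<le> N"
    and c_nonneg: "\<And>x y. c x y \<ge> 0"
    and M_pos: "M > 0"
    and r_pos: "\<And>x. r x > 0" and s_pos: "\<And>y. s y > 0"
    and r_sum: "(\<Sum>x\<in>UNIV. r x) = int M" and s_sum: "(\<Sum>y\<in>UNIV. s y) = int M"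
    and mu_def: "\<And>x. \<mu> x = real_of_int (r x) / real M"
    and nu_def: "\<And>y. \<nu> y = real_of_int (s y) / real M"
    and eps: "\<epsilon>1 > \<epsilon>2" "\<epsilon>2 > 0"
    and max1: "\<And>\<alpha> \<beta>. Jfun \<epsilon>1 c \<mu> \<nu> \<alpha> \<beta> \<le> Jfun \<epsilon>1 c \<mu> \<nu> \<alpha>1 \<beta>1"
    and max2: "\<And>\<alpha> \<beta>. Jfun \<epsilon>2 c \<mu> \<nu> \<alpha> \<beta> \<le> Jfun \<epsilon>2 c \<mu> \<nu> \<alpha>2 \<beta>2"
    and qt: "0 < qt" "qt < 1"
  shows "\<exists>n::nat. 1 \<le> n \<and>
     real n \<le> 2 + (\<epsilon>1 / \<epsilon>2) * ((real N * (4 * ln (real N) + 24 * ln (real M)) + ln (real M)) / (1 - qt)) \<and>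
     sk_q (Kern \<epsilon>2 c \<mu> \<nu>) \<mu> \<nu> (\<lambda>y. exp (\<beta>1 y / \<epsilon>2)) n \<ge> qt"
proof -
  interpret warm_started_sinkhorn M r s \<mu> \<nu> c N \<epsilon>1 \<epsilon>2 \<alpha>1 \<alpha>2 \<beta>1 \<beta>2
    using cardX cardY M_pos r_pos s_pos r_sum s_sum mu_def nu_def eps max1 max2
    by unfold_locales auto
  show ?thesis using warm_start_iteration_bound[OF qt] by auto
qed

end
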